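(* Let $K$, $A$, $B$ be real $m\times m$ matrices with $K$ and $B$ anti-symmetric and $A$ symmetric. At a fixed interface point, let $\mathbf z^{+}(t),\mathbf z^{-}(t),\breve{\mathbf z}^{+}(t),\breve{\mathbf z}^{-}(t)\in\mathbb R^m$ be continuously differentiable functions of $t$ (the right and left traces at that interface of two time-dependent piecewise polynomial vector functions $\mathbf z_h,\breve{\mathbf z}_h$). Set $\{\mathbf z\}=\tfrac12(\mathbf z^++\mathbf z^-)$, $[\mathbf z]=\mathbf z^+-\mathbf z^-$ (similarly for $\breve{\mathbf z}$), $\{K\mathbf z\cdot\breve{\mathbf z}\}=\tfrac12(K\mathbf z^+\cdot\breve{\mathbf z}^++K\mathbf z^-\cdot\breve{\mathbf z}^-)$, and define the numerical fluxes $$\widehat{K\mathbf z}=K\{\mathbf z\}+A[\mathbf z]+B\,\tfrac{d}{dt}[\mathbf z],\qquad \widehat{K\breve{\mathbf z}}=K\{\breve{\mathbf z}\}+A[\breve{\mathbf z}]+B\,\tfrac{d}{dt}[\breve{\mathbf z}],$$ and $$\mathcal F(\mathbf z,\breve{\mathbf z})=\{K\mathbf z\cdot\breve{\mathbf z}\}-\widehat{K\mathbf z}\cdot\{\breve{\mathbf z}\}+\widehat{K\breve{\mathbf z}}\cdot\{\mathbf z\}.$$ Then $$K\mathbf z^-\cdot\breve{\mathbf z}^--\widehat{K\mathbf z}\cdot\breve{\mathbf z}^-+\widehat{K\breve{\mathbf z}}\cdot\mathbf z^-=\mathcal F(\mathbf z,\breve{\mathbf z})-\tfrac12\tfrac{d}{dt}\big(B[\breve{\mathbf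 z}]\cdot[\mathbf z]\big),$$ $$K\mathbf z^+\cdot\breve{\mathbf z}^+-\widehat{K\mathbf z}\cdot\breve{\mathbf z}^++\widehat{K\breve{\mathbf z}}\cdot\mathbf z^+=\mathcal F(\mathbf z,\breve{\mathbf z})+\tfrac12\tfrac{d}{dt}\big(B[\breve{\mathbf z}]\cdot[\mathbf z]\big).$$
   Context: $\cdot$ denotes the Euclidean inner product on $\mathbb R^m$. In the paper these identities are applied at each cell interface $x_{j+1/2}$ of a one-dimensional mesh, with $\mathbf z^\pm$ the right/left limits of discontinuous piecewise polynomial functions. *)

theory Defs
  imports "HOL-Analysis.Analysis"
begin

definition avg :: "real^'m \<Rightarrow> real^'m \<Rightarrow> real^'m" where
  "avg zp zm = (1/2) *\<^sub>R (zp + zm)"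

definition jump :: "real^'m \<Rightarrow> real^'m \<Rightarrow> real^'m" where
  "jump zp zm = zp - zm"

definition numflux :: "real^'m^'m \<Rightarrow> real^'m^'m \<Rightarrow> real^'m^'m \<Rightarrow>
    (real \<Rightarrow> real^'m) \<Rightarrow> (real \<Rightarrow> real^'m) \<Rightarrow> real \<Rightarrow> real^'m" where
  "numflux K A B zp zm t =
     K *v avg (zp t) (zm t) + A *v jump (zp t) (zm t)
     + B *v vector_derivative (\<lambda>s. jump (zp s) (zm s)) (at t)"

definition avg_prod :: "real^'m^'m \<Rightarrow> real^'m \<Rightarrow> real^'m \<Rightarrow> real^'m \<Rightarrow> real^'m \<Rightarrow> real" where
  "avg_prod K zp zm bp bm = (1/2) * ((K *v zp) \<bullet> bp + (K *v zm) \<bullet> bm)"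

definition Fcal :: "real^'m^'m \<Rightarrow> real^'m^'m \<Rightarrow> real^'m^'m \<Rightarrow>
    (real \<Rightarrow> real^'m) \<Rightarrow> (real \<Rightarrow> real^'m) \<Rightarrow> (real \<Rightarrow> real^'m) \<Rightarrow> (real \<Rightarrow> real^'m) \<Rightarrow> real \<Rightarrow> real" where
  "Fcal K A B zp zm bp bm t =
     avg_prod K (zp t) (zm t) (bp t) (bm t)
     - numflux K A B zp zm t \<bullet> avg (bp t) (bm t)
     + numflux K A B bp bm t \<bullet> avg (zp t) (zm t)"

end

theory Submission
  imports Defs
begin

text \<open>Since zp = {z} + [z]/2 and zm = {z} - [z]/2, each one-sided expression
  equals Fcal plus or minus D/2, where
  D = K zp \<bullet> bp - K zm \<bullet> bm - fz \<bullet> [b] + fb \<bullet> [z].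
  Expanding the fluxes, the K-terms of D cancel because K is anti-symmetric, the A-terms because
  A is symmetric, and since B is anti-symmetric the B-terms are exactly the product-rule
  derivative of B [b] \<bullet> [z].\<close>

lemma matrix_vector_inner_transpose:
  fixes M :: "real^'n^'n"
  shows "(M *v x) \<bullet> y = (transpose M *v y) \<bullet> x"
  by (metis dot_lmul_matrix inner_commute vector_transpose_matrix)

lemma antisymmetric_matrix_inner_swap:
  fixes M :: "real^'n^'n"
  assumes "transpose M = - M"
  shows "(M *v x) \<bullet> y = - ((M *v y) \<bullet> x)"
proof -
  have "(- M) *v y = - (M *v y)"
    by (simp add: matrix_vector_mult_def vec_eq_iff sum_negf)
  then show ?thesis
    using matrix_vector_inner_transpose[of M x y] assms by simp
qed

lemma symmetric_matrix_inner_swap: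
  fixes M :: "real^'n^'n"
  assumes "transpose M = M"
  shows "(M *v x) \<bullet> y = (M *v y) \<bullet> x"
  using matrix_vector_inner_transpose[of M x y] assms by simp

lemma trace_minus_eq_avg_jump:
  fixes M :: "real^'m^'m"
  shows "(M *v zm) \<bullet> bm - fz \<bullet> bm + fb \<bullet> zm
       = avg_prod M zp zm bp bm - fz \<bullet> avg bp bm + fb \<bullet> avg zp zm
         - (1/2) * ((M *v zp) \<bullet> bp - (M *v zm) \<bullet> bm - fz \<bullet> jump bp bm + fb \<bullet> jump zp zm)"
  by (simp add: avg_prod_def avg_def jump_def inner_add_right inner_diff_right algebra_simps)

lemma trace_plus_eq_avg_jump:
  fixes M :: "real^'m^'m"
  shows "(M *v zp) \<bullet> bp - fz \<bullet> bp + fb \<bullet> zp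
       = avg_prod M zp zm bp bm - fz \<bullet> avg bp bm + fb \<bullet> avg zp zm
         + (1/2) * ((M *v zp) \<bullet> bp - (M *v zm) \<bullet> bm - fz \<bullet> jump bp bm + fb \<bullet> jump zp zm)"
  by (simp add: avg_prod_def avg_def jump_def inner_add_right inner_diff_right algebra_simps)

lemma jump_of_matrix_inner:
  fixes M :: "real^'m^'m"
  shows "(M *v zp) \<bullet> bp - (M *v zm) \<bullet> bm
       = (M *v avg zp zm) \<bullet> jump bp bm + (M *v jump zp zm) \<bullet> avg bp bm"
  by (simp add: avg_def jump_def matrix_vector_mult_scaleR algebra_simps
      inner_add_left inner_add_right inner_diff_left inner_diff_right)

lemma flux_jump_defect:
  fixes K A B :: "real^'m^'m"
  assumes K: "transpose K = - K" and A: "transpose A = A" and B: "transpose B = - B"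
  shows "(K *v zp) \<bullet> bp - (K *v zm) \<bullet> bm
           - (K *v avg zp zm + A *v jump zp zm + B *v dz) \<bullet> jump bp bm
           + (K *v avg bp bm + A *v jump bp bm + B *v db) \<bullet> jump zp zm
       = (B *v jump bp bm) \<bullet> dz + (B *v db) \<bullet> jump zp zm"
proof -
  have "(K *v jump zp zm) \<bullet> avg bp bm = - ((K *v avg bp bm) \<bullet> jump zp zm)"
    using antisymmetric_matrix_inner_swap[OF K] .
  moreover have "(A *v jump zp zm) \<bullet> jump bp bm = (A *v jump bp bm) \<bullet> jump zp zm"
    using symmetric_matrix_inner_swap[OF A] .
  moreover have "(B *v dz) \<bullet> jump bp bm = - ((B *v jump bp bm) \<bullet> dz)"
    using antisymmetric_matrix_inner_swap[OF B] .
  ultimately show ?thesis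
    unfolding jump_of_matrix_inner[of K] by (simp add: inner_add_left)
qed

lemma has_vector_derivative_jump:
  assumes "(zp has_vector_derivative dp) F" and "(zm has_vector_derivative dm) F"
  shows "((\<lambda>s. jump (zp s) (zm s)) has_vector_derivative jump dp dm) F"
  unfolding jump_def using assms by (rule derivative_intros)

lemma has_vector_derivative_matrix_inner:
  fixes M :: "real^'m^'m"
  assumes "(u has_vector_derivative du) (at t within S)"
    and "(v has_vector_derivative dv) (at t within S)"
  shows "((\<lambda>s. (M *v u s) \<bullet> v s) has_vector_derivative (M *v u t) \<bullet> dv + (M *v du) \<bullet> v t)
           (at t within S)"
proof -
  have "((\<lambda>s. M *v u s) has_vector_derivative M *v du) (at t within S)"
    using bounded_linear.has_vector_derivative[OF matrix_vector_mul_bounded_linear assms(1)] .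
  from bounded_bilinear.has_vector_derivative[OF bounded_bilinear_inner this assms(2)]
  show ?thesis by simp
qed

lemma C1_differentiable_on_has_vector_derivative:
  assumes "f C1_differentiable_on UNIV"
  shows "(f has_vector_derivative vector_derivative f (at t)) (at t)"
  using assms by (simp add: C1_differentiable_on_eq flip: vector_derivative_works)

theorem lemma3p1:
  fixes K A B :: "real^'m^'m"
    and zp zm bp bm :: "real \<Rightarrow> real^'m"
    and t :: real
  assumes "transpose K = - K" and "transpose B = - B" and "transpose A = A"
    and "zp C1_differentiable_on UNIV" and "zm C1_differentiable_on UNIV"
    and "bp C1_differentiable_on UNIV" and "bm C1_differentiable_on UNIV"
  shows "((K *v zm t) \<bullet> bm t - numflux K A B zp zm t \<bullet> bm t + numflux K A B bp bm t \<bullet> zm t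
           = Fcal K A B zp zm bp bm t
             - (1/2) * vector_derivative (\<lambda>s. (B *v jump (bp s) (bm s)) \<bullet> jump (zp s) (zm s)) (at t))
       \<and> ((K *v zp t) \<bullet> bp t - numflux K A B zp zm t \<bullet> bp t + numflux K A B bp bm t \<bullet> zp t
           = Fcal K A B zp zm bp bm t
             + (1/2) * vector_derivative (\<lambda>s. (B *v jump (bp s) (bm s)) \<bullet> jump (zp s) (zm s)) (at t))"
proof -
  define dz where "dz = jump (vector_derivative zp (at t)) (vector_derivative zm (at t))"
  define db where "db = jump (vector_derivative bp (at t)) (vector_derivative bm (at t))"
  have jump_z: "((\<lambda>s. jump (zp s) (zm s)) has_vector_derivative dz) (at t)"
    unfolding dz_def using assms(4,5)
    by (intro has_vector_derivative_jump C1_differentiable_on_has_vector_derivative)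
  have jump_b: "((\<lambda>s. jump (bp s) (bm s)) has_vector_derivative db) (at t)"
    unfolding db_def using assms(6,7)
    by (intro has_vector_derivative_jump C1_differentiable_on_has_vector_derivative)
  have flux_z: "numflux K A B zp zm t = K *v avg (zp t) (zm t) + A *v jump (zp t) (zm t) + B *v dz"
    unfolding numflux_def using jump_z by (simp add: vector_derivative_at)
  have flux_b: "numflux K A B bp bm t = K *v avg (bp t) (bm t) + A *v jump (bp t) (bm t) + B *v db"
    unfolding numflux_def using jump_b by (simp add: vector_derivative_at)
  have "vector_derivative (\<lambda>s. (B *v jump (bp s) (bm s)) \<bullet> jump (zp s) (zm s)) (at t)
      = (B *v jump (bp t) (bm t)) \<bullet> dz + (B *v db) \<bullet> jump (zp t) (zm t)"
    using has_vector_derivative_matrix_inner[OF jump_b jump_z] by (rule vector_derivative_at)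
  also have "\<dots> = (K *v zp t) \<bullet> bp t - (K *v zm t) \<bullet> bm t
      - numflux K A B zp zm t \<bullet> jump (bp t) (bm t) + numflux K A B bp bm t \<bullet> jump (zp t) (zm t)"
    unfolding flux_z flux_b using flux_jump_defect assms(1-3) by metis
  finally show ?thesis
    unfolding Fcal_def
    using trace_minus_eq_avg_jump[where zp = "zp t" and bp = "bp t"]
      trace_plus_eq_avg_jump[where zm = "zm t" and bm = "bm t"]
    by simp
qed

end
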